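(* Let $k$ be an infinite field of characteristic $0$. If $X_1,X_2,Y_1,Y_2$ are finite sets and the free representations $W(X_1,Y_1)$ and $W(X_2,Y_2)$ are isomorphic, then $|X_1|=|X_2|$ and $|Y_1|=|Y_2|$.
   Context: A representation $(L,V)$ is a Lie algebra $L$ over $k$ with an $L$-module $V$; an isomorphism is a pair $(\varphi,\psi)$ of a Lie algebra isomorphism $\varphi$ and a linear bijection $\psi$ with $\varphi(l)\circ\psi(v)=\psi(l\circ v)$. $W(X,Y)=(L(X),A(X)Y)$, where $L(X)$ is the free Lie algebra on $X$, $A(X)$ the free associative algebra with unit on $X$, and $A(X)Y=\bigoplus_{y\in Y}A(X)y$ the free $A(X)$-module with basis $Y$. *)

theory Defs
  imports Main
begin

text \<open>Concrete model of the free associative algebra A(X) with unit on a set X: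
  finitely supported functions from words (lists over X) to k, with the
  concatenation (convolution) product.\<close>

definition falg :: "'a set \<Rightarrow> ('a list \<Rightarrow> 'k::comm_ring_1) set" where
  "falg X = {p. finite {w. p w \<noteq> 0} \<and> (\<forall>w. p w \<noteq> 0 \<longrightarrow> set w \<subseteq> X)}"

definition amul :: "('a list \<Rightarrow> 'k::comm_ring_1) \<Rightarrow> ('a list \<Rightarrow> 'k) \<Rightarrow> 'a list \<Rightarrow> 'k" where
  "amul p q w = (\<Sum>i\<le>length w. p (take i w) * q (drop i w))"

definition bracket :: "('a list \<Rightarrow> 'k::comm_ring_1) \<Rightarrow> ('a list \<Rightarrow> 'k) \<Rightarrow> 'a list \<Rightarrow> 'k" where
  "bracket p q = (\<lambda>w. amul p q w - amul q p w)"

definition gen :: "'a \<Rightarrow> 'a list \<Rightarrow> 'k::comm_ring_1" where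
  "gen x = (\<lambda>w. if w = [x] then 1 else 0)"

text \<open>The free Lie algebra L(X), realised (as usual) as the Lie subalgebra of
  A(X) (with the commutator bracket) generated by X.\<close>
inductive_set flie :: "'a set \<Rightarrow> ('a list \<Rightarrow> 'k::comm_ring_1) set" for X :: "'a set" where
  gen: "x \<in> X \<Longrightarrow> gen x \<in> flie X"
| zero: "(\<lambda>_. 0) \<in> flie X"
| add: "p \<in> flie X \<Longrightarrow> q \<in> flie X \<Longrightarrow> (\<lambda>w. p w + q w) \<in> flie X"
| smult: "p \<in> flie X \<Longrightarrow> (\<lambda>w. c * p w) \<in> flie X"
| br: "p \<in> flie X \<Longrightarrow> q \<in> flie X \<Longrightarrow> bracket p q \<in> flie X"

text \<open>The free A(X)-module A(X)Y with basis Y: finitely supported functions on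
  (word, basis element) pairs.\<close>
definition fmod :: "'a set \<Rightarrow> 'b set \<Rightarrow> ('a list \<times> 'b \<Rightarrow> 'k::comm_ring_1) set" where
  "fmod X Y = {v. finite {z. v z \<noteq> 0} \<and> (\<forall>w y. v (w, y) \<noteq> 0 \<longrightarrow> set w \<subseteq> X \<and> y \<in> Y)}"

definition act :: "('a list \<Rightarrow> 'k::comm_ring_1) \<Rightarrow> ('a list \<times> 'b \<Rightarrow> 'k) \<Rightarrow> 'a list \<times> 'b \<Rightarrow> 'k" where
  "act p v = (\<lambda>(w, y). \<Sum>i\<le>length w. p (take i w) * v (drop i w, y))"

definition linear_on :: "('x \<Rightarrow> 'k::comm_ring_1) set \<Rightarrow> (('x \<Rightarrow> 'k) \<Rightarrow> ('z \<Rightarrow> 'k)) \<Rightarrow> bool" where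
  "linear_on A f \<longleftrightarrow> (\<forall>p\<in>A. \<forall>q\<in>A. \<forall>a b.
      f (\<lambda>u. a * p u + b * q u) = (\<lambda>u. a * f p u + b * f q u))"

text \<open>An isomorphism (phi, psi) of representations W(X1,Y1) \<rightarrow> W(X2,Y2).\<close>
definition rep_iso ::
  "(('a list \<Rightarrow> 'k::comm_ring_1) \<Rightarrow> ('c list \<Rightarrow> 'k)) \<Rightarrow>
   (('a list \<times> 'b \<Rightarrow> 'k) \<Rightarrow> ('c list \<times> 'd \<Rightarrow> 'k)) \<Rightarrow>
   'a set \<Rightarrow> 'b set \<Rightarrow> 'c set \<Rightarrow> 'd set \<Rightarrow> bool" where
  "rep_iso \<phi> \<psi> X1 Y1 X2 Y2 \<longleftrightarrow>
     bij_betw \<phi> (flie X1) (flie X2) \<and> linear_on (flie X1) \<phi> \<and>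
     (\<forall>p\<in>flie X1. \<forall>q\<in>flie X1. \<phi> (bracket p q) = bracket (\<phi> p) (\<phi> q)) \<and>
     bij_betw \<psi> (fmod X1 Y1) (fmod X2 Y2) \<and> linear_on (fmod X1 Y1) \<psi> \<and>
     (\<forall>l\<in>flie X1. \<forall>v\<in>fmod X1 Y1. act (\<phi> l) (\<psi> v) = \<psi> (act l v))"

end

theory Submission
  imports Defs "HOL.Vector_Spaces" "HOL-Library.Function_Algebras"
begin

text \<open>Both cardinalities are dimensions of quotient spaces that any isomorphism \<open>(\<phi>, \<psi>)\<close>
  preserves. Modulo \<open>[L(X), L(X)]\<close> every Lie element is the combination of generators given by
  its coefficients on the one-letter words, so \<open>L(X)/[L(X), L(X)] \<cong> k\<^sup>X\<close>; modulo \<open>L(X) \<cdot> A(X)Y\<close>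
  every module element is its degree-zero part, because an element of positive degree is
  \<open>\<Sum>\<^sub>x x \<cdot> v\<^sub>x\<close>, so \<open>A(X)Y/(L(X) \<cdot> A(X)Y) \<cong> k\<^sup>Y\<close>. As \<open>\<phi>\<close> respects brackets and \<open>\<psi>\<close> intertwines
  the actions, they map these subspaces onto their counterparts and induce linear isomorphisms
  of the quotients.\<close>

interpretation fun_vs: vector_space "\<lambda>(a::'k::field) (f::'i \<Rightarrow> 'k) x. a * f x"
  by unfold_locales (auto simp: fun_eq_iff algebra_simps)

lemma sum_fun_apply: "(\<Sum>i\<in>F. g i) x = (\<Sum>i\<in>F. g i x)"
  by (induction F rule: infinite_finite_induct) auto

definition supported_on :: "'i set \<Rightarrow> ('i \<Rightarrow> 'k::zero) set" where
  "supported_on I = {c. \<forall>i. i \<notin> I \<longrightarrow> c i = 0}"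

definition delta :: "'i \<Rightarrow> 'i \<Rightarrow> 'k::{zero,one}" where
  "delta i = (\<lambda>j. if j = i then 1 else 0)"

lemma inj_delta: "inj (delta :: 'i \<Rightarrow> 'i \<Rightarrow> 'k::zero_neq_one)"
  unfolding inj_def delta_def by (metis zero_neq_one)

lemma sum_delta_expansion:
  fixes c :: "'i \<Rightarrow> 'k::comm_ring_1"
  assumes "finite I" "c \<in> supported_on I"
  shows "(\<Sum>i\<in>I. (\<lambda>j. c i * delta i j)) = c"
proof (rule ext)
  fix j
  have "(\<Sum>i\<in>I. (\<lambda>j. c i * delta i j)) j = (\<Sum>i\<in>I. if j = i then c i else 0)"
    unfolding sum_fun_apply by (rule sum.cong) (auto simp: delta_def)
  also have "\<dots> = c j"
    using assms by (auto simp: supported_on_def)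
  finally show "(\<Sum>i\<in>I. (\<lambda>j. c i * delta i j)) j = c j" .
qed

lemma span_delta:
  fixes I :: "'i set"
  assumes "finite I"
  shows "fun_vs.span (delta ` I) = (supported_on I :: ('i \<Rightarrow> 'k::field) set)"
proof (rule fun_vs.span_subspace)
  show "delta ` I \<subseteq> (supported_on I :: ('i \<Rightarrow> 'k) set)"
    by (auto simp: delta_def supported_on_def)
  show "fun_vs.subspace (supported_on I :: ('i \<Rightarrow> 'k) set)"
    by (auto simp: fun_vs.subspace_def supported_on_def)
  show "supported_on I \<subseteq> fun_vs.span (delta ` I :: ('i \<Rightarrow> 'k) set)"
  proof
    fix c :: "'i \<Rightarrow> 'k" assume c: "c \<in> supported_on I"
    have "(\<Sum>i\<in>I. (\<lambda>j. c i * delta i j)) \<in> fun_vs.span (delta ` I)"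
      by (intro fun_vs.span_sum fun_vs.span_scale fun_vs.span_base) auto
    then show "c \<in> fun_vs.span (delta ` I)"
      using sum_delta_expansion[OF assms c] by simp
  qed
qed

lemma independent_delta: "fun_vs.independent (delta ` I :: ('i \<Rightarrow> 'k::field) set)"
proof (unfold fun_vs.independent_explicit_module, intro allI impI)
  fix t :: "('i \<Rightarrow> 'k) set" and u v
  assume t: "finite t" "t \<subseteq> delta ` I" and sum0: "(\<Sum>w\<in>t. (\<lambda>x. u w * w x)) = 0" and v: "v \<in> t"
  obtain i where i: "v = delta i"
    using t v by auto
  have "0 = (\<Sum>w\<in>t. u w * w i)"
    using fun_cong[OF sum0, of i] by (simp add: sum_fun_apply)
  also have "\<dots> = (\<Sum>w\<in>t. if w = v then u w else 0)"
  proof (rule sum.cong)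
    fix w assume "w \<in> t"
    then obtain j where w: "w = delta j"
      using t by auto
    have "w = v \<longleftrightarrow> j = i"
      unfolding w i using inj_delta by (rule inj_eq)
    then show "u w * w i = (if w = v then u w else 0)"
      by (simp add: w delta_def)
  qed simp
  also have "\<dots> = u v"
    using t v by simp
  finally show "u v = 0" by simp
qed

lemma card_eq_if_linear_bij_supported:
  fixes T :: "('i \<Rightarrow> 'k::field) \<Rightarrow> 'j \<Rightarrow> 'k"
  assumes I: "finite I" and J: "finite J"
    and lin: "Vector_Spaces.linear (\<lambda>a f x. a * f x) (\<lambda>a f x. a * f x) T"
    and inj: "inj_on T (supported_on I)" and img: "T ` supported_on I = supported_on J"
  shows "card I = card J"
proof -
  interpret T: Vector_Spaces.linear "\<lambda>a (f::'i \<Rightarrow> 'k) x. a * f x" "\<lambda>a (f::'j \<Rightarrow> 'k) x. a * f x" T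
    by (fact lin)
  have span_I: "fun_vs.span (delta ` I) = (supported_on I :: ('i \<Rightarrow> 'k) set)"
    and span_J: "fun_vs.span (delta ` J) = (supported_on J :: ('j \<Rightarrow> 'k) set)"
    using span_delta I J by blast+
  have indep_J: "fun_vs.independent (delta ` J :: ('j \<Rightarrow> 'k) set)"
    by (rule independent_delta)
  have "fun_vs.span (T ` delta ` I) = T ` fun_vs.span (delta ` I)"
    by (rule T.span_image)
  then have "fun_vs.span (T ` delta ` I) = fun_vs.span (delta ` J)"
    using img by (simp add: span_I span_J)
  moreover have "fun_vs.independent (T ` delta ` I)"
    using T.independent_injective_image[OF independent_delta] inj by (simp add: span_I)
  ultimately have "card (T ` delta ` I) = card (delta ` J :: ('j \<Rightarrow> 'k) set)"
    using fun_vs.dim_eq_card fun_vs.dim_eq_card_independent[OF indep_J] by metis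
  moreover have "inj_on T (delta ` I)"
    using inj span_I fun_vs.span_superset by (metis inj_on_subset)
  then have "card (T ` delta ` I) = card I"
    using inj_delta by (metis card_image inj_on_subset subset_UNIV)
  moreover have "card (delta ` J :: ('j \<Rightarrow> 'k) set) = card J"
    using inj_delta by (metis card_image inj_on_subset subset_UNIV)
  ultimately show ?thesis
    by simp
qed

lemma linear_onD:
  "linear_on A f \<Longrightarrow> p \<in> A \<Longrightarrow> q \<in> A \<Longrightarrow>
    f (\<lambda>u. a * p u + b * q u) = (\<lambda>u. a * f p u + b * f q u)"
  unfolding linear_on_def by blast

lemma linear_on_add:
  "linear_on A f \<Longrightarrow> p \<in> A \<Longrightarrow> q \<in> A \<Longrightarrow> f (\<lambda>u. p u + q u) = (\<lambda>u. f p u + f q u)"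
  using linear_onD[of A f p q 1 1] by simp

lemma linear_on_diff:
  "linear_on A f \<Longrightarrow> p \<in> A \<Longrightarrow> q \<in> A \<Longrightarrow> f (\<lambda>u. p u - q u) = (\<lambda>u. f p u - f q u)"
  using linear_onD[of A f p q 1 "-1"] by simp

lemma linear_on_scale:
  "linear_on A f \<Longrightarrow> p \<in> A \<Longrightarrow> f (\<lambda>u. c * p u) = (\<lambda>u. c * f p u)"
  using linear_onD[of A f p p c 0] by simp

lemma linear_on_zero:
  "linear_on A f \<Longrightarrow> p \<in> A \<Longrightarrow> f (\<lambda>_. 0) = (\<lambda>_. 0)"
  using linear_onD[of A f p p 0 0] by simp

lemma linear_on_image_span:
  fixes f :: "('x \<Rightarrow> 'k::field) \<Rightarrow> 'z \<Rightarrow> 'k"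
  assumes A: "fun_vs.subspace A" and S: "S \<subseteq> A" and f: "linear_on A f"
  shows "f ` fun_vs.span S = fun_vs.span (f ` S)"
proof
  have span_A: "fun_vs.span S \<subseteq> A"
    using S A by (rule fun_vs.span_minimal)
  have f_0: "f 0 = 0"
    using linear_on_zero[OF f fun_vs.subspace_0[OF A]] by (simp add: zero_fun_def)
  have f_add: "f (p + q) = f p + f q" if "p \<in> A" "q \<in> A" for p q
    using linear_on_add[OF f that] by (simp add: plus_fun_def)
  show "f ` fun_vs.span S \<subseteq> fun_vs.span (f ` S)"
  proof clarify
    fix p assume "p \<in> fun_vs.span S"
    then have "p \<in> A \<and> f p \<in> fun_vs.span (f ` S)"
    proof (induction rule: fun_vs.span_induct)
      case base
      show ?case
        unfolding fun_vs.subspace_def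
        using A f_0 f_add linear_on_scale[OF f]
        by (auto intro: fun_vs.span_zero fun_vs.span_add fun_vs.span_scale
                 simp: fun_vs.subspace_add fun_vs.subspace_scale fun_vs.subspace_0)
    next
      case (step p)
      then show ?case
        using S by (auto intro: fun_vs.span_base)
    qed
    then show "f p \<in> fun_vs.span (f ` S)" ..
  qed
  show "fun_vs.span (f ` S) \<subseteq> f ` fun_vs.span S"
  proof (rule fun_vs.span_minimal)
    show "f ` S \<subseteq> f ` fun_vs.span S"
      by (auto intro: fun_vs.span_base)
    show "fun_vs.subspace (f ` fun_vs.span S)"
      unfolding fun_vs.subspace_def
    proof safe
      show "0 \<in> f ` fun_vs.span S"
        using f_0 fun_vs.span_zero by force
      fix p q assume "p \<in> fun_vs.span S" "q \<in> fun_vs.span S"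
      then show "f p + f q \<in> f ` fun_vs.span S"
        using span_A f_add by (metis fun_vs.span_add image_eqI subsetD)
    next
      fix c p assume "p \<in> fun_vs.span S"
      then show "(\<lambda>x. c * f p x) \<in> f ` fun_vs.span S"
        using span_A linear_on_scale[OF f] by (metis fun_vs.span_scale image_eqI subsetD)
    qed
  qed
qed

text \<open>The coordinates \<open>p \<mapsto> (\<lambda>i. p (pt i))\<close> identify \<open>A/C\<close> with the functions supported on
  \<open>I\<close>, and \<open>lift\<close> is a linear section of this identification.\<close>

locale quotient_coordinates =
  fixes A C :: "('p \<Rightarrow> 'k::field) set" and I :: "'i set"
    and pt :: "'i \<Rightarrow> 'p" and lift :: "('i \<Rightarrow> 'k) \<Rightarrow> 'p \<Rightarrow> 'k"
  assumes subset: "C \<subseteq> A"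
    and lift_in: "lift c \<in> A"
    and lift_linear: "lift (\<lambda>i. a * c i + b * c' i) = (\<lambda>u. a * lift c u + b * lift c' u)"
    and coords_lift: "c \<in> supported_on I \<Longrightarrow> (\<lambda>i. lift c (pt i)) = c"
    and coords_supported: "p \<in> A \<Longrightarrow> (\<lambda>i. p (pt i)) \<in> supported_on I"
    and diff_lift_coords: "p \<in> A \<Longrightarrow> (\<lambda>u. p u - lift (\<lambda>i. p (pt i)) u) \<in> C"
    and coords_vanish: "p \<in> C \<Longrightarrow> p (pt i) = 0"
begin

lemma lift_zero: "lift (\<lambda>_. 0) = (\<lambda>_. 0)"
  using lift_linear[of 0 "\<lambda>_. 0" 0 "\<lambda>_. 0"] by simp

lemma mem_iff_coords_zero:
  assumes "p \<in> A"
  shows "p \<in> C \<longleftrightarrow> (\<forall>i. p (pt i) = 0)"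
proof
  assume "\<forall>i. p (pt i) = 0"
  then have "(\<lambda>i. p (pt i)) = (\<lambda>_. 0)"
    by simp
  then show "p \<in> C"
    using diff_lift_coords[OF assms] by (simp add: lift_zero)
qed (use coords_vanish in blast)

end

locale quotient_iso =
  A: quotient_coordinates A CA I ptA liftA + B: quotient_coordinates B CB J ptB liftB
  for A CA :: "('p \<Rightarrow> 'k::field) set" and I :: "'i set" and ptA liftA
    and B CB :: "('q \<Rightarrow> 'k) set" and J :: "'j set" and ptB liftB +
  fixes f :: "('p \<Rightarrow> 'k) \<Rightarrow> 'q \<Rightarrow> 'k"
  assumes f_linear: "linear_on A f" and f_bij: "bij_betw f A B" and f_image: "f ` CA = CB"
begin

definition induced :: "('i \<Rightarrow> 'k) \<Rightarrow> 'j \<Rightarrow> 'k" where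
  "induced c = (\<lambda>j. f (liftA c) (ptB j))"

lemma f_in: "p \<in> A \<Longrightarrow> f p \<in> B"
  using f_bij by (rule bij_betw_apply)

lemma induced_comb: "induced (\<lambda>i. a * c i + b * c' i) = (\<lambda>j. a * induced c j + b * induced c' j)"
  unfolding induced_def A.lift_linear by (simp add: linear_onD[OF f_linear A.lift_in A.lift_in])

lemma linear_induced: "Vector_Spaces.linear (\<lambda>a f x. a * f x) (\<lambda>a f x. a * f x) induced"
  unfolding linear_iff
  by (intro conjI allI fun_vs.vector_space_axioms)
    (use induced_comb[of 1 _ 1] induced_comb[of _ _ 0] in \<open>simp_all add: plus_fun_def\<close>)

lemma inj_on_induced: "inj_on induced (supported_on I)"
proof (rule inj_onI)
  fix c c' assume c: "c \<in> supported_on I" and c': "c' \<in> supported_on I"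
    and eq: "induced c = induced c'"
  define p where "p = liftA (\<lambda>i. 1 * c i + (-1) * c' i)"
  have p: "p \<in> A"
    unfolding p_def by (rule A.lift_in)
  have "(\<lambda>j. f p (ptB j)) = induced (\<lambda>i. 1 * c i + (-1) * c' i)"
    by (simp add: induced_def p_def)
  also have "\<dots> = (\<lambda>_. 0)"
    unfolding induced_comb eq by simp
  finally have "f p \<in> CB"
    using B.mem_iff_coords_zero f_in[OF p] by (metis fun_eq_iff)
  then have "f p \<in> f ` CA"
    by (simp only: f_image)
  then obtain q where q: "q \<in> CA" "f p = f q"
    by (rule imageE)
  then have "p = q"
    using inj_onD[OF bij_betw_imp_inj_on[OF f_bij]] p A.subset by blast
  with q(1) have "p \<in> CA"
    by simp
  have "(\<lambda>i. 1 * c i + (-1) * c' i) \<in> supported_on I"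
    using c c' by (simp add: supported_on_def)
  then have coords_p: "(\<lambda>i. p (ptA i)) = (\<lambda>i. 1 * c i + (-1) * c' i)"
    unfolding p_def by (rule A.coords_lift)
  have "c i - c' i = 0" for i
    using A.coords_vanish[OF \<open>p \<in> CA\<close>, of i] fun_cong[OF coords_p, of i] by simp
  then show "c = c'"
    by (simp add: fun_eq_iff)
qed

lemma supported_on_subset_induced_image: "supported_on J \<subseteq> induced ` supported_on I"
proof
  fix c :: "'j \<Rightarrow> 'k" assume c: "c \<in> supported_on J"
  have "liftB c \<in> f ` A"
    using bij_betw_imp_surj_on[OF f_bij] B.lift_in by simp
  then obtain p where p: "p \<in> A" "f p = liftB c"
    by auto
  define d where "d = (\<lambda>i. p (ptA i))"
  have d: "d \<in> supported_on I"
    unfolding d_def using p(1) by (rule A.coords_supported)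
  have "(\<lambda>u. p u - liftA d u) \<in> CA"
    unfolding d_def using p(1) by (rule A.diff_lift_coords)
  then have "f (\<lambda>u. p u - liftA d u) \<in> CB"
    unfolding f_image[symmetric] by (rule imageI)
  then have "(\<lambda>u. f p u - f (liftA d) u) \<in> CB"
    by (simp only: linear_on_diff[OF f_linear p(1) A.lift_in])
  then have "f p (ptB j) = induced d j" for j
    using B.coords_vanish unfolding induced_def by fastforce
  then have "(\<lambda>j. liftB c (ptB j)) = induced d"
    unfolding p(2)[symmetric] induced_def by simp
  then have "induced d = c"
    using B.coords_lift[OF c] by simp
  with d show "c \<in> induced ` supported_on I"
    by blast
qed

lemma induced_image: "induced ` supported_on I = supported_on J"
proof
  show "induced ` supported_on I \<subseteq> supported_on J"
    unfolding induced_def using B.coords_supported[OF f_in[OF A.lift_in]] by blast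
qed (rule supported_on_subset_induced_image)

lemma card_eq: "finite I \<Longrightarrow> finite J \<Longrightarrow> card I = card J"
  using linear_induced inj_on_induced induced_image by (rule card_eq_if_linear_bij_supported[rotated 2])

end

lemma card_eq_if_quotient_iso:
  assumes "quotient_coordinates A CA I ptA liftA" "quotient_coordinates B CB J ptB liftB"
    and "finite I" "finite J"
    and "linear_on A f" "bij_betw f A B" "f ` CA = CB"
  shows "card I = card J"
  using assms by (intro quotient_iso.card_eq quotient_iso.intro quotient_iso_axioms.intro)

lemma sum_nonzero_term: "(\<Sum>i\<in>F. g i) \<noteq> (0::'k::comm_monoid_add) \<Longrightarrow> \<exists>i\<in>F. g i \<noteq> 0"
  by (meson sum.neutral)

lemma amul_nonzero_split:
  assumes "amul p q w \<noteq> 0"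
  shows "\<exists>a b. w = a @ b \<and> p a \<noteq> 0 \<and> q b \<noteq> 0"
proof -
  obtain i where "p (take i w) * q (drop i w) \<noteq> 0"
    using sum_nonzero_term assms unfolding amul_def by blast
  then show ?thesis
    by (intro exI[of _ "take i w"] exI[of _ "drop i w"]) auto
qed

lemma act_nonzero_split:
  assumes "act p v (w, y) \<noteq> 0"
  shows "\<exists>a b. w = a @ b \<and> p a \<noteq> 0 \<and> v (b, y) \<noteq> 0"
proof -
  obtain i where "p (take i w) * v (drop i w, y) \<noteq> 0"
    using sum_nonzero_term assms unfolding act_def by fastforce
  then show ?thesis
    by (intro exI[of _ "take i w"] exI[of _ "drop i w"]) auto
qed

lemma amul_falg:
  assumes p: "p \<in> falg X" and q: "q \<in> falg X"
  shows "amul p q \<in> falg X"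
proof -
  have "{w. amul p q w \<noteq> 0} \<subseteq> (\<lambda>(a, b). a @ b) ` ({w. p w \<noteq> 0} \<times> {w. q w \<noteq> 0})"
    by (auto dest!: amul_nonzero_split)
  moreover have "finite ({w. p w \<noteq> 0} \<times> {w. q w \<noteq> 0})"
    using p q by (simp add: falg_def)
  ultimately have "finite {w. amul p q w \<noteq> 0}"
    by (meson finite_imageI finite_subset)
  moreover have "set w \<subseteq> X" if w: "amul p q w \<noteq> 0" for w
  proof -
    obtain a b where "w = a @ b" "p a \<noteq> 0" "q b \<noteq> 0"
      using amul_nonzero_split[OF w] by blast
    then show ?thesis
      using p q unfolding falg_def by auto
  qed
  ultimately show ?thesis
    by (simp add: falg_def)
qed

lemma falg_combine:
  assumes p: "p \<in> falg X" and q: "q \<in> falg X"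
    and h: "\<And>w. h w \<noteq> 0 \<Longrightarrow> p w \<noteq> 0 \<or> q w \<noteq> 0"
  shows "h \<in> falg X"
proof -
  have "{w. h w \<noteq> 0} \<subseteq> {w. p w \<noteq> 0} \<union> {w. q w \<noteq> 0}"
    using h by blast
  then have "finite {w. h w \<noteq> 0}"
    using p q unfolding falg_def by (auto intro: finite_subset)
  moreover have "set w \<subseteq> X" if "h w \<noteq> 0" for w
    using h[OF that] p q unfolding falg_def by blast
  ultimately show ?thesis
    unfolding falg_def by blast
qed

lemma flie_falg: "p \<in> flie X \<Longrightarrow> p \<in> falg X"
proof (induction rule: flie.induct)
  case (gen x)
  then show ?case
    unfolding falg_def gen_def by auto
next
  case zero
  then show ?case
    unfolding falg_def by auto
next
  case (add p q)
  from add.IH show ?case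
    by (rule falg_combine) auto
next
  case (smult p c)
  from smult.IH smult.IH show ?case
    by (rule falg_combine) auto
next
  case (br p q)
  have "amul p q \<in> falg X" "amul q p \<in> falg X"
    using br.IH by (auto intro: amul_falg)
  then show ?case
    unfolding bracket_def by (rule falg_combine) auto
qed

lemma subspace_flie: "fun_vs.subspace (flie X)"
  unfolding fun_vs.subspace_def zero_fun_def plus_fun_def
  by (auto intro: flie.intros)

lemma bracket_Nil: "bracket p q [] = 0"
  by (simp add: bracket_def amul_def)

lemma bracket_singleton: "bracket p q [x] = 0"
  by (simp add: bracket_def amul_def atMost_Suc mult.commute)

lemma flie_Nil: "p \<in> flie X \<Longrightarrow> p [] = 0"
  by (induction rule: flie.induct) (auto simp: gen_def bracket_Nil)

lemma flie_singleton: "p \<in> flie X \<Longrightarrow> x \<notin> X \<Longrightarrow> p [x] = 0"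
  by (induction rule: flie.induct) (auto simp: gen_def bracket_singleton)

lemma fmod_combine:
  assumes p: "p \<in> fmod X Y" and q: "q \<in> fmod X Y"
    and h: "\<And>z. h z \<noteq> 0 \<Longrightarrow> p z \<noteq> 0 \<or> q z \<noteq> 0"
  shows "h \<in> fmod X Y"
proof -
  have "{z. h z \<noteq> 0} \<subseteq> {z. p z \<noteq> 0} \<union> {z. q z \<noteq> 0}"
    using h by blast
  then have "finite {z. h z \<noteq> 0}"
    using p q unfolding fmod_def by (auto intro: finite_subset)
  moreover have "set w \<subseteq> X \<and> y \<in> Y" if "h (w, y) \<noteq> 0" for w y
    using h[OF that] p q unfolding fmod_def by blast
  ultimately show ?thesis
    unfolding fmod_def by blast
qed

lemma subspace_fmod: "fun_vs.subspace (fmod X Y :: ('a list \<times> 'b \<Rightarrow> 'k::field) set)"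
  unfolding fun_vs.subspace_def zero_fun_def plus_fun_def
proof safe
  show "(\<lambda>_. 0) \<in> fmod X Y"
    by (simp add: fmod_def)
next
  fix p q :: "'a list \<times> 'b \<Rightarrow> 'k"
  assume "p \<in> fmod X Y" "q \<in> fmod X Y"
  then show "(\<lambda>z. p z + q z) \<in> fmod X Y"
    by (rule fmod_combine) auto
next
  fix c and p :: "'a list \<times> 'b \<Rightarrow> 'k"
  assume p: "p \<in> fmod X Y"
  from p p show "(\<lambda>z. c * p z) \<in> fmod X Y"
    by (rule fmod_combine) auto
qed

lemma act_fmod:
  assumes p: "p \<in> falg X" and v: "v \<in> fmod X Y"
  shows "act p v \<in> fmod X Y"
proof -
  have "{z. act p v z \<noteq> 0} \<subseteq> (\<lambda>(a, b, y). (a @ b, y)) ` ({w. p w \<noteq> 0} \<times> {z. v z \<noteq> 0})"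
    by (force dest!: act_nonzero_split)
  moreover have "finite ({w. p w \<noteq> 0} \<times> {z. v z \<noteq> 0})"
    using p v by (simp add: falg_def fmod_def)
  ultimately have "finite {z. act p v z \<noteq> 0}"
    by (meson finite_imageI finite_subset)
  moreover have "set w \<subseteq> X \<and> y \<in> Y" if wy: "act p v (w, y) \<noteq> 0" for w y
  proof -
    obtain a b where "w = a @ b" "p a \<noteq> 0" "v (b, y) \<noteq> 0"
      using act_nonzero_split[OF wy] by blast
    then show ?thesis
      using p v unfolding falg_def fmod_def by auto
  qed
  ultimately show ?thesis
    by (simp add: fmod_def)
qed

lemma act_Nil: "act p v ([], y) = p [] * v ([], y)"
  by (simp add: act_def)

text \<open>\<open>derived_flie X\<close> is \<open>[L(X), L(X)]\<close> and \<open>act_span X Y\<close> below is \<open>L(X) \<cdot> A(X)Y\<close>.\<close>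

definition derived_flie :: "'a set \<Rightarrow> ('a list \<Rightarrow> 'k::field) set" where
  "derived_flie X = fun_vs.span {bracket p q | p q. p \<in> flie X \<and> q \<in> flie X}"

definition gens_comb :: "'a set \<Rightarrow> ('a \<Rightarrow> 'k::comm_ring_1) \<Rightarrow> 'a list \<Rightarrow> 'k" where
  "gens_comb X c = (\<lambda>w. \<Sum>x\<in>X. c x * gen x w)"

lemma gens_comb_flie:
  assumes "finite X"
  shows "gens_comb X c \<in> flie X"
proof -
  have "(\<lambda>w. \<Sum>x\<in>F. c x * gen x w) \<in> flie X" if "finite F" "F \<subseteq> X" for F
    using that
  proof (induction F rule: finite_induct)
    case empty
    then show ?case
      using flie.zero by simp
  next
    case (insert x F)
    then have "(\<lambda>w. c x * gen x w + (\<Sum>x\<in>F. c x * gen x w)) \<in> flie X"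
      by (intro flie.add flie.smult flie.gen) auto
    with insert show ?case
      by simp
  qed
  with assms show ?thesis
    unfolding gens_comb_def by blast
qed

lemma gens_comb_singleton:
  assumes "finite X"
  shows "gens_comb X c [x] = (if x \<in> X then c x else 0)"
proof -
  have "gens_comb X c [x] = (\<Sum>y\<in>X. if x = y then c y else 0)"
    unfolding gens_comb_def by (rule sum.cong) (auto simp: gen_def)
  with assms show ?thesis
    by simp
qed

lemma gens_comb_gen:
  assumes "finite X" "x \<in> X"
  shows "gens_comb X (\<lambda>y. gen x [y]) = gen x"
proof
  fix w
  have "gens_comb X (\<lambda>y. gen x [y]) w = (\<Sum>y\<in>X. if x = y then gen x w else 0)"
    unfolding gens_comb_def by (rule sum.cong) (auto simp: gen_def)
  with assms show "gens_comb X (\<lambda>y. gen x [y]) w = gen x w"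
    by simp
qed

lemma gens_comb_linear:
  "gens_comb X (\<lambda>x. a * c x + b * c' x) = (\<lambda>w. a * gens_comb X c w + b * gens_comb X c' w)"
  by (simp add: gens_comb_def fun_eq_iff sum.distrib sum_distrib_left algebra_simps)

lemma flie_diff_gens_comb:
  assumes X: "finite X" and p: "p \<in> flie X"
  shows "(\<lambda>w. p w - gens_comb X (\<lambda>x. p [x]) w) \<in> derived_flie X"
  using p
proof (induction rule: flie.induct)
  case (gen x)
  then show ?case
    using fun_vs.span_zero by (simp add: gens_comb_gen X derived_flie_def zero_fun_def)
next
  case zero
  then show ?case
    using fun_vs.span_zero by (simp add: gens_comb_def derived_flie_def zero_fun_def)
next
  case (add p q)
  have "(\<lambda>w. p w + q w - gens_comb X (\<lambda>x. p [x] + q [x]) w)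
      = (\<lambda>w. p w - gens_comb X (\<lambda>x. p [x]) w) + (\<lambda>w. q w - gens_comb X (\<lambda>x. q [x]) w)"
    using gens_comb_linear[of X 1 "\<lambda>x. p [x]" 1 "\<lambda>x. q [x]"] by (simp add: fun_eq_iff)
  with add.IH show ?case
    unfolding derived_flie_def by (simp add: fun_vs.span_add)
next
  case (smult p c)
  have "(\<lambda>w. c * p w - gens_comb X (\<lambda>x. c * p [x]) w)
      = (\<lambda>w. c * (p w - gens_comb X (\<lambda>x. p [x]) w))"
    using gens_comb_linear[of X c "\<lambda>x. p [x]" 0 "\<lambda>x. p [x]"] by (simp add: fun_eq_iff algebra_simps)
  with smult.IH show ?case
    unfolding derived_flie_def by (simp add: fun_vs.span_scale)
next
  case (br p q)
  have "gens_comb X (\<lambda>x. bracket p q [x]) = (\<lambda>_. 0)"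
    by (simp add: bracket_singleton gens_comb_def)
  with br.hyps show ?case
    unfolding derived_flie_def by (auto intro: fun_vs.span_base)
qed

lemma derived_flie_singleton:
  assumes "p \<in> derived_flie X"
  shows "p [x] = 0"
  using assms unfolding derived_flie_def
proof (induction rule: fun_vs.span_induct)
  case base
  then show ?case
    by (simp add: fun_vs.subspace_def)
next
  case (step p)
  then show ?case
    by (auto simp: bracket_singleton)
qed

lemma quotient_coordinates_flie:
  assumes "finite X"
  shows "quotient_coordinates (flie X) (derived_flie X) X (\<lambda>x. [x]) (gens_comb X)"
proof
  show "derived_flie X \<subseteq> flie X"
    unfolding derived_flie_def
    by (rule fun_vs.span_minimal[OF _ subspace_flie]) (auto intro: flie.br)
qed (auto simp: assms gens_comb_flie gens_comb_linear gens_comb_singleton supported_on_def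
       flie_singleton flie_diff_gens_comb derived_flie_singleton)

definition act_span :: "'a set \<Rightarrow> 'b set \<Rightarrow> ('a list \<times> 'b \<Rightarrow> 'k::field) set" where
  "act_span X Y = fun_vs.span {act l v | l v. l \<in> flie X \<and> v \<in> fmod X Y}"

definition basis_comb :: "'b set \<Rightarrow> ('b \<Rightarrow> 'k::comm_ring_1) \<Rightarrow> 'a list \<times> 'b \<Rightarrow> 'k" where
  "basis_comb Y c = (\<lambda>(w, y). if w = [] \<and> y \<in> Y then c y else 0)"

definition shift :: "'a \<Rightarrow> ('a list \<times> 'b \<Rightarrow> 'k) \<Rightarrow> 'a list \<times> 'b \<Rightarrow> 'k" where
  "shift x v = (\<lambda>(w, y). v (x # w, y))"

lemma fmodD: "v \<in> fmod X Y \<Longrightarrow> v (w, y) \<noteq> 0 \<Longrightarrow> set w \<subseteq> X \<and> y \<in> Y"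
  unfolding fmod_def by blast

lemma basis_comb_fmod:
  assumes "finite Y"
  shows "basis_comb Y c \<in> fmod X Y"
proof -
  have "{z. basis_comb Y c z \<noteq> 0} \<subseteq> {[]} \<times> Y"
    by (auto simp: basis_comb_def split: if_splits)
  with assms show ?thesis
    unfolding fmod_def by (auto intro: finite_subset simp: basis_comb_def split: if_splits)
qed

lemma shift_fmod:
  assumes x: "x \<in> X" and v: "v \<in> fmod X Y"
  shows "shift x v \<in> fmod X Y"
proof -
  have "{z. shift x v z \<noteq> 0} = (\<lambda>(w, y). (x # w, y)) -` {z. v z \<noteq> 0}"
    by (auto simp: shift_def)
  moreover have "inj (\<lambda>(w :: 'a list, y :: 'b). (x # w, y))"
    by (auto intro: injI)
  ultimately have "finite {z. shift x v z \<noteq> 0}"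
    using v finite_vimageI by (fastforce simp: fmod_def)
  moreover have "set w \<subseteq> X \<and> y \<in> Y" if "shift x v (w, y) \<noteq> 0" for w y
    using fmodD[OF v, of "x # w" y] that by (simp add: shift_def)
  ultimately show ?thesis
    by (simp add: fmod_def)
qed

lemma act_gen_Nil: "act (gen x) v ([], y) = 0"
  by (simp add: act_Nil gen_def)

lemma act_gen_Cons: "act (gen x) v (x' # w, y) = (if x' = x then v (w, y) else 0)"
proof -
  have "act (gen x) v (x' # w, y)
      = (\<Sum>i\<le>Suc (length w). gen x (take i (x' # w)) * v (drop i (x' # w), y))"
    by (simp add: act_def)
  also have "\<dots> = (\<Sum>j\<le>length w. gen x (x' # take j w) * v (drop j w, y))"
    by (subst sum.atMost_Suc_shift) (simp add: gen_def)
  also have "\<dots> = (\<Sum>j\<le>length w. if j = 0 then (if x' = x then v (w, y) else 0) else 0)"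
    by (rule sum.cong) (auto simp: gen_def)
  also have "\<dots> = (if x' = x then v (w, y) else 0)"
    by simp
  finally show ?thesis .
qed

lemma fmod_diff_basis_comb_eq_sum:
  assumes X: "finite X" and v: "v \<in> fmod X Y"
  shows "(\<lambda>z. v z - basis_comb Y (\<lambda>y. v ([], y)) z) = (\<Sum>x\<in>X. act (gen x) (shift x v))"
proof
  fix z :: "'a list \<times> 'b"
  obtain w y where z: "z = (w, y)"
    by fastforce
  show "v z - basis_comb Y (\<lambda>y. v ([], y)) z = (\<Sum>x\<in>X. act (gen x) (shift x v)) z"
  proof (cases w)
    case Nil
    then show ?thesis
      using v by (auto simp: z sum_fun_apply act_gen_Nil basis_comb_def fmod_def)
  next
    case (Cons x' w')
    have "(\<Sum>x\<in>X. act (gen x) (shift x v)) z = (\<Sum>x\<in>X. if x' = x then v (x' # w', y) else 0)"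
      unfolding sum_fun_apply by (rule sum.cong) (auto simp: z Cons act_gen_Cons shift_def)
    also have "\<dots> = (if x' \<in> X then v (x' # w', y) else 0)"
      using X by simp
    also have "\<dots> = v z"
      using fmodD[OF v, of "x' # w'" y] by (auto simp: z Cons)
    finally show ?thesis
      by (simp add: z Cons basis_comb_def)
  qed
qed

lemma fmod_diff_basis_comb:
  assumes X: "finite X" and v: "v \<in> fmod X Y"
  shows "(\<lambda>z. v z - basis_comb Y (\<lambda>y. v ([], y)) z) \<in> act_span X Y"
  unfolding fmod_diff_basis_comb_eq_sum[OF assms] act_span_def
  using v by (intro fun_vs.span_sum fun_vs.span_base) (auto intro: flie.gen shift_fmod)

lemma act_span_Nil:
  assumes "p \<in> act_span X Y"
  shows "p ([], y) = 0"
  using assms unfolding act_span_def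
proof (induction rule: fun_vs.span_induct)
  case base
  then show ?case
    by (simp add: fun_vs.subspace_def)
next
  case (step p)
  then show ?case
    by (auto simp: act_Nil flie_Nil)
qed

lemma quotient_coordinates_fmod:
  fixes X :: "'a set" and Y :: "'b set"
  assumes X: "finite X" and Y: "finite Y"
  shows "quotient_coordinates (fmod X Y :: ('a list \<times> 'b \<Rightarrow> 'k::field) set) (act_span X Y) Y
    (\<lambda>y. ([], y)) (basis_comb Y)"
proof
  show "act_span X Y \<subseteq> fmod X Y"
    unfolding act_span_def
    by (rule fun_vs.span_minimal[OF _ subspace_fmod]) (auto intro: act_fmod flie_falg)
  show "basis_comb Y c \<in> fmod X Y" for c :: "'b \<Rightarrow> 'k"
    using Y by (rule basis_comb_fmod)
  show "basis_comb Y (\<lambda>i. a * c i + b * c' i) = (\<lambda>u. a * basis_comb Y c u + b * basis_comb Y c' u)"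
    for a b :: 'k and c c' :: "'b \<Rightarrow> 'k"
    by (auto simp: basis_comb_def fun_eq_iff)
  show "(\<lambda>i. basis_comb Y c ([], i)) = c" if "c \<in> supported_on Y" for c :: "'b \<Rightarrow> 'k"
    using that by (auto simp: basis_comb_def supported_on_def)
  show "(\<lambda>i. p ([], i)) \<in> supported_on Y" if "p \<in> fmod X Y" for p :: "'a list \<times> 'b \<Rightarrow> 'k"
    using that by (auto simp: fmod_def supported_on_def)
  show "(\<lambda>u. p u - basis_comb Y (\<lambda>i. p ([], i)) u) \<in> act_span X Y" if "p \<in> fmod X Y" for p :: "'a list \<times> 'b \<Rightarrow> 'k"
    using X that by (rule fmod_diff_basis_comb)
  show "p ([], i) = 0" if "p \<in> act_span X Y" for p :: "'a list \<times> 'b \<Rightarrow> 'k" and i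
    using that by (rule act_span_Nil)
qed

lemma rep_iso_derived_flie:
  assumes "rep_iso \<phi> \<psi> X1 Y1 X2 Y2"
  shows "\<phi> ` derived_flie X1 = derived_flie X2"
proof -
  have img: "\<phi> ` flie X1 = flie X2" and lin: "linear_on (flie X1) \<phi>"
    and br: "\<And>p q. p \<in> flie X1 \<Longrightarrow> q \<in> flie X1 \<Longrightarrow> \<phi> (bracket p q) = bracket (\<phi> p) (\<phi> q)"
    using assms unfolding rep_iso_def bij_betw_def by auto
  have brackets: "\<phi> ` {bracket p q |p q. p \<in> flie X1 \<and> q \<in> flie X1}
      = {bracket p q |p q. p \<in> flie X2 \<and> q \<in> flie X2}"
    unfolding img[symmetric] using br by (auto simp: image_iff) metis
  have "{bracket p q |p q. p \<in> flie X1 \<and> q \<in> flie X1} \<subseteq> flie X1"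
    by (auto intro: flie.br)
  from subspace_flie this lin show ?thesis
    unfolding derived_flie_def brackets[symmetric] by (rule linear_on_image_span)
qed

lemma rep_iso_act_span:
  assumes "rep_iso \<phi> \<psi> X1 Y1 X2 Y2"
  shows "\<psi> ` act_span X1 Y1 = act_span X2 Y2"
proof -
  have img_L: "\<phi> ` flie X1 = flie X2" and img_V: "\<psi> ` fmod X1 Y1 = fmod X2 Y2"
    and lin: "linear_on (fmod X1 Y1) \<psi>"
    and act: "\<And>l v. l \<in> flie X1 \<Longrightarrow> v \<in> fmod X1 Y1 \<Longrightarrow> \<psi> (act l v) = act (\<phi> l) (\<psi> v)"
    using assms unfolding rep_iso_def bij_betw_def by auto
  have actions: "\<psi> ` {act l v |l v. l \<in> flie X1 \<and> v \<in> fmod X1 Y1}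
      = {act l v |l v. l \<in> flie X2 \<and> v \<in> fmod X2 Y2}"
    unfolding img_L[symmetric] img_V[symmetric] using act by (auto simp: image_iff) metis
  have "{act l v |l v. l \<in> flie X1 \<and> v \<in> fmod X1 Y1} \<subseteq> fmod X1 Y1"
    by (auto intro: act_fmod flie_falg)
  from subspace_fmod this lin show ?thesis
    unfolding act_span_def actions[symmetric] by (rule linear_on_image_span)
qed

theorem theorem4:
  fixes X1 :: "'a set" and Y1 :: "'b set" and X2 :: "'c set" and Y2 :: "'d set"
  assumes "infinite (UNIV :: 'k::field_char_0 set)"
    and "finite X1" and "finite X2" and "finite Y1" and "finite Y2"
    and "\<exists>(\<phi> :: ('a list \<Rightarrow> 'k) \<Rightarrow> ('c list \<Rightarrow> 'k))
          (\<psi> :: ('a list \<times> 'b \<Rightarrow> 'k) \<Rightarrow> ('c list \<times> 'd \<Rightarrow> 'k)).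
          rep_iso \<phi> \<psi> X1 Y1 X2 Y2"
  shows "card X1 = card X2 \<and> card Y1 = card Y2"
proof -
  obtain \<phi> :: "('a list \<Rightarrow> 'k) \<Rightarrow> 'c list \<Rightarrow> 'k" and \<psi> :: "('a list \<times> 'b \<Rightarrow> 'k) \<Rightarrow> 'c list \<times> 'd \<Rightarrow> 'k"
    where iso: "rep_iso \<phi> \<psi> X1 Y1 X2 Y2"
    using assms(6) by blast
  then have \<phi>: "linear_on (flie X1) \<phi>" "bij_betw \<phi> (flie X1) (flie X2)"
    and \<psi>: "linear_on (fmod X1 Y1) \<psi>" "bij_betw \<psi> (fmod X1 Y1) (fmod X2 Y2)"
    unfolding rep_iso_def by auto
  have "card X1 = card X2"
    using quotient_coordinates_flie[OF assms(2)] quotient_coordinates_flie[OF assms(3)]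
      assms(2,3) \<phi> rep_iso_derived_flie[OF iso]
    by (rule card_eq_if_quotient_iso)
  moreover have "card Y1 = card Y2"
    using quotient_coordinates_fmod[OF assms(2,4)] quotient_coordinates_fmod[OF assms(3,5)]
      assms(4,5) \<psi> rep_iso_act_span[OF iso]
    by (rule card_eq_if_quotient_iso)
  ultimately show ?thesis ..
qed

end
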